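(* Let $(F,C,(u_f)_{f\in F},d,k)$ be an instance of Capacitated $k$-Median. Let $A\subseteq F$ be a set of at most $\ell$ facilities (a solution to Uncapacitated $k$-Median opening at most $\ell\ge k$ facilities), and let $\mathrm{cost}_d(A)=\sum_{c\in C}\min_{f\in A} d(c,f)$. Construct the $\ell$-centered metric $d_\ell$ from $A$ as follows: for each $f\in A$ create a new point $s^f$ (a center) with $d(s^f,f)=0$, extending $d$ naturally to $F\cup C\cup S$ where $S=\{s^f: f\in A\}$; build a weighted graph on $F\cup C\cup S$ consisting of a complete graph on $S$ with edge lengths given by $d$, and, for every $v\in F\cup C$, a single edge from $v$ to a center $s^v\in S$ closest to $v$ (with respect to the extended $d$), of length $d(v,s^v)$; let $d_\ell$ be the shortest-path metric of this graph. Let $\phi^*$ be the assignment of an optimal solution of the Capacitated $k$-Median instance with metric $d$, and for a metric $d'$ write $\mathrm{cost}(\phi^*,d')=\sum_{c\in C}d'(c,\phi^*(c))$. Then $$\mathrm{cost}(\phi^*,d)\le \mathrm{cost}(\phi^*,d_\ell)\le 3\,\mathrm{cost}(\phi^*,d)+4\,\mathrm{cost}_d(A).$$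
   Context: Capacitated $k$-Median: given facilities $F$ with capacities $u_f\in\mathbb{Z}_{\ge0}$, clients $C$, a metric $d$ on $F\cup C$ and an integer $k$; a feasible solution is a set of at most $k$ open facilities and an assignment $\phi$ of clients to open facilities with at most $u_f$ clients assigned to each open $f$; the cost is $\sum_{c}d(c,\phi(c))$, to be minimized. *)

theory Defs
  imports Complex_Main
begin

definition is_metric_on :: "'a set \<Rightarrow> ('a \<Rightarrow> 'a \<Rightarrow> real) \<Rightarrow> bool" where
  "is_metric_on X d \<longleftrightarrow>
     (\<forall>x\<in>X. \<forall>y\<in>X. d x y \<ge> 0 \<and> d x y = d y x \<and> (d x y = 0 \<longleftrightarrow> x = y)) \<and>
     (\<forall>x\<in>X. \<forall>y\<in>X. \<forall>z\<in>X. d x z \<le> d x y + d y z)"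

definition ckm_feasible ::
  "'a set \<Rightarrow> 'a set \<Rightarrow> ('a \<Rightarrow> nat) \<Rightarrow> nat \<Rightarrow> 'a set \<Rightarrow> ('a \<Rightarrow> 'a) \<Rightarrow> bool" where
  "ckm_feasible F C u k Op \<phi> \<longleftrightarrow>
     Op \<subseteq> F \<and> card Op \<le> k \<and> (\<forall>c\<in>C. \<phi> c \<in> Op) \<and>
     (\<forall>f\<in>Op. card {c\<in>C. \<phi> c = f} \<le> u f)"

definition assign_cost :: "('b \<Rightarrow> 'b \<Rightarrow> real) \<Rightarrow> 'a set \<Rightarrow> ('a \<Rightarrow> 'b) \<Rightarrow> ('a \<Rightarrow> 'a) \<Rightarrow> real" where
  "assign_cost d' C emb \<phi> = (\<Sum>c\<in>C. d' (emb c) (emb (\<phi> c)))"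

definition ckm_optimal ::
  "'a set \<Rightarrow> 'a set \<Rightarrow> ('a \<Rightarrow> nat) \<Rightarrow> ('a \<Rightarrow> 'a \<Rightarrow> real) \<Rightarrow> nat \<Rightarrow> 'a set \<Rightarrow> ('a \<Rightarrow> 'a) \<Rightarrow> bool" where
  "ckm_optimal F C u d k Op \<phi> \<longleftrightarrow> ckm_feasible F C u k Op \<phi> \<and>
     (\<forall>Op' \<phi>'. ckm_feasible F C u k Op' \<phi>' \<longrightarrow> assign_cost d C id \<phi> \<le> assign_cost d C id \<phi>')"

definition cost_set :: "('a \<Rightarrow> 'a \<Rightarrow> real) \<Rightarrow> 'a set \<Rightarrow> 'a set \<Rightarrow> real" where
  "cost_set d C A = (\<Sum>c\<in>C. Min ((\<lambda>f. d c f) ` A))"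

definition is_walk :: "('v \<Rightarrow> 'v \<Rightarrow> bool) \<Rightarrow> 'v list \<Rightarrow> 'v \<Rightarrow> 'v \<Rightarrow> bool" where
  "is_walk E p u v \<longleftrightarrow> p \<noteq> [] \<and> hd p = u \<and> last p = v \<and>
     (\<forall>(x,y)\<in>set (zip p (tl p)). E x y)"

definition walk_length :: "('v \<Rightarrow> 'v \<Rightarrow> real) \<Rightarrow> 'v list \<Rightarrow> real" where
  "walk_length w p = sum_list (map (\<lambda>(x,y). w x y) (zip p (tl p)))"

definition shortest_path_dist ::
  "('v \<Rightarrow> 'v \<Rightarrow> bool) \<Rightarrow> ('v \<Rightarrow> 'v \<Rightarrow> real) \<Rightarrow> 'v \<Rightarrow> 'v \<Rightarrow> real" where
  "shortest_path_dist E w u v = Inf {walk_length w p | p. is_walk E p u v}"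

text \<open>Vertices: Inl x for x in F \<union> C, Inr f for the new center s^f (f in A).
  The extension of d identifies s^f with f (so d(s^f,f) = 0).\<close>
definition ext_metric :: "('a \<Rightarrow> 'a \<Rightarrow> real) \<Rightarrow> 'a + 'a \<Rightarrow> 'a + 'a \<Rightarrow> real" where
  "ext_metric d x y = d (case_sum id id x) (case_sum id id y)"

text \<open>sel v is the facility f in A whose center s^f is the chosen closest center s^v.\<close>
definition centered_edges ::
  "'a set \<Rightarrow> 'a set \<Rightarrow> 'a set \<Rightarrow> ('a \<Rightarrow> 'a) \<Rightarrow> 'a + 'a \<Rightarrow> 'a + 'a \<Rightarrow> bool" where
  "centered_edges F C A sel x y \<longleftrightarrow>
     (\<exists>f g. x = Inr f \<and> y = Inr g \<and> f \<in> A \<and> g \<in> A \<and> f \<noteq> g) \<or>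
     (\<exists>v. v \<in> F \<union> C \<and> x = Inl v \<and> y = Inr (sel v)) \<or>
     (\<exists>v. v \<in> F \<union> C \<and> y = Inl v \<and> x = Inr (sel v))"

definition centered_metric ::
  "'a set \<Rightarrow> 'a set \<Rightarrow> ('a \<Rightarrow> 'a \<Rightarrow> real) \<Rightarrow> 'a set \<Rightarrow> ('a \<Rightarrow> 'a) \<Rightarrow> 'a + 'a \<Rightarrow> 'a + 'a \<Rightarrow> real" where
  "centered_metric F C d A sel = shortest_path_dist (centered_edges F C A sel) (ext_metric d)"

end

theory Submission
  imports Defs
begin

text \<open>Every edge of the centered graph has length at least the original distance of its
  endpoints (centers sit on their facilities), so by the triangle inequality every walk is at
  least as long as \<open>d\<close>; this gives the lower bound. For the upper bound, a client \<open>c\<close> reaches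
  \<open>\<phi> c\<close> along \<open>c \<rightarrow> s\<^sup>a \<rightarrow> s\<^sup>b \<rightarrow> \<phi> c\<close> with \<open>a\<close>, \<open>b\<close> the centers closest to \<open>c\<close> and \<open>\<phi> c\<close>;
  the triangle inequality and the choice of \<open>a\<close> and \<open>b\<close> bound its length by
  \<open>3 d(c, \<phi> c) + 4 d(c, a)\<close>, and \<open>d(c, a)\<close> is the contribution of \<open>c\<close> to \<open>cost\<^sub>d(A)\<close>.\<close>

lemma is_walk_Cons_Cons:
  "is_walk E (x # y # ys) u v \<longleftrightarrow> u = x \<and> E x y \<and> is_walk E (y # ys) y v"
  by (auto simp: is_walk_def)

lemma walk_length_Cons_Cons:
  "walk_length w (x # y # ys) = w x y + walk_length w (y # ys)"
  by (simp add: walk_length_def)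

lemma is_walk_end_closed:
  assumes "is_walk E p u v" and "P u" and "\<And>x y. E x y \<Longrightarrow> P y"
  shows "P v"
  using assms(1,2)
proof (induction p arbitrary: u rule: induct_list012)
  case (3 x y ys)
  then show ?case using assms(3) by (auto simp: is_walk_Cons_Cons)
qed (auto simp: is_walk_def)

lemma walk_length_ge_metric_dist:
  fixes d :: "'a \<Rightarrow> 'a \<Rightarrow> real"
  assumes metric: "is_metric_on S d"
    and edges_into_S: "\<And>x y. E x y \<Longrightarrow> \<pi> y \<in> S"
    and walk: "is_walk E p u v" and u: "\<pi> u \<in> S"
  shows "d (\<pi> u) (\<pi> v) \<le> walk_length (\<lambda>x y. d (\<pi> x) (\<pi> y)) p"
  using walk u
proof (induction p arbitrary: u rule: induct_list012)
  case 1
  then show ?case by (simp add: is_walk_def)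
next
  case (2 x)
  then have "u = v" by (auto simp: is_walk_def)
  then have "d (\<pi> u) (\<pi> v) = 0" using metric "2.prems"(2) by (simp add: is_metric_on_def)
  then show ?case by (simp add: walk_length_def)
next
  case (3 x y ys)
  then have "u = x" and Exy: "E x y" and tail: "is_walk E (y # ys) y v"
    by (simp_all add: is_walk_Cons_Cons)
  have y: "\<pi> y \<in> S" using edges_into_S[OF Exy] .
  have v: "\<pi> v \<in> S"
    using is_walk_end_closed[OF tail, of "\<lambda>x. \<pi> x \<in> S"] y edges_into_S by blast
  have "d (\<pi> u) (\<pi> v) \<le> d (\<pi> u) (\<pi> y) + d (\<pi> y) (\<pi> v)"
    using metric "3.prems"(2) y v unfolding is_metric_on_def by blast
  also have "\<dots> \<le> d (\<pi> u) (\<pi> y) + walk_length (\<lambda>x y. d (\<pi> x) (\<pi> y)) (y # ys)"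
    using "3.IH"(2)[OF tail y] by simp
  finally show ?case using \<open>u = x\<close> by (simp add: walk_length_Cons_Cons)
qed

lemma shortest_path_dist_greatest:
  assumes "is_walk E p u v" and "\<And>q. is_walk E q u v \<Longrightarrow> m \<le> walk_length w q"
  shows "m \<le> shortest_path_dist E w u v"
  unfolding shortest_path_dist_def using assms by (auto intro!: cInf_greatest)

lemma shortest_path_dist_le_walk_length:
  assumes "is_walk E p u v" and "\<And>q. is_walk E q u v \<Longrightarrow> m \<le> walk_length w q"
  shows "shortest_path_dist E w u v \<le> walk_length w p"
  unfolding shortest_path_dist_def using assms
  by (intro cInf_lower) (auto intro!: bdd_belowI[where m = m])

context
  fixes F C A :: "'a set" and d :: "'a \<Rightarrow> 'a \<Rightarrow> real" and sel :: "'a \<Rightarrow> 'a"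
  assumes metric: "is_metric_on (F \<union> C) d"
    and A_sub_F: "A \<subseteq> F"
    and sel_closest: "\<And>v. v \<in> F \<union> C \<Longrightarrow> sel v \<in> A \<and> (\<forall>f\<in>A. d v (sel v) \<le> d v f)"
begin

lemma centered_edge_target_in_base:
  "centered_edges F C A sel x y \<Longrightarrow> case_sum id id y \<in> F \<union> C"
  using sel_closest A_sub_F unfolding centered_edges_def by auto

lemma centered_walk_length_ge:
  assumes "is_walk (centered_edges F C A sel) q (Inl x) (Inl y)" and "x \<in> F \<union> C"
  shows "d x y \<le> walk_length (ext_metric d) q"
proof -
  have "ext_metric d = (\<lambda>x y. d (case_sum id id x) (case_sum id id y))"
    by (simp add: fun_eq_iff ext_metric_def)
  then show ?thesis
    using walk_length_ge_metric_dist[where \<pi> = "case_sum id id",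
        OF metric centered_edge_target_in_base assms(1)] assms(2)
    by simp
qed

lemma centered_path_to_closest_centers:
  assumes c: "c \<in> F \<union> C" and f: "f \<in> F \<union> C"
  obtains p where "is_walk (centered_edges F C A sel) p (Inl c) (Inl f)"
    and "walk_length (ext_metric d) p \<le> 3 * d c f + 4 * d c (sel c)"
proof -
  define a b where "a = sel c" and "b = sel f"
  have "a \<in> A" "b \<in> A" using sel_closest c f by (auto simp: a_def b_def)
  then have a: "a \<in> F \<union> C" and b: "b \<in> F \<union> C" using A_sub_F by auto
  have b_closest: "d f b \<le> d f a"
    using sel_closest f \<open>a \<in> A\<close> by (auto simp: b_def)
  have triangle: "\<And>x y z. x \<in> F \<union> C \<Longrightarrow> y \<in> F \<union> C \<Longrightarrow> z \<in> F \<union> C \<Longrightarrow>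
      d x z \<le> d x y + d y z"
    and dist_sym: "\<And>x y. x \<in> F \<union> C \<Longrightarrow> y \<in> F \<union> C \<Longrightarrow> d x y = d y x"
    and nonneg: "\<And>x y. x \<in> F \<union> C \<Longrightarrow> y \<in> F \<union> C \<Longrightarrow> 0 \<le> d x y"
    using metric unfolding is_metric_on_def by blast+
  show thesis
  proof (cases "a = b")
    case True
    \<comment> \<open>there is no loop at \<open>s\<^sup>a\<close>, so the walk skips the edge between the two centers\<close>
    let ?p = "[Inl c, Inr a, Inl f]"
    have "is_walk (centered_edges F C A sel) ?p (Inl c) (Inl f)"
      using c f True by (auto simp: is_walk_def centered_edges_def a_def b_def)
    moreover have "walk_length (ext_metric d) ?p \<le> 3 * d c f + 4 * d c a"
      using triangle[OF a c f] dist_sym[OF a c] dist_sym[OF a f] nonneg[OF c a] nonneg[OF c f]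
      by (simp add: walk_length_def ext_metric_def)
    ultimately show thesis using that[of ?p] by (simp add: a_def)
  next
    case False
    let ?p = "[Inl c, Inr a, Inr b, Inl f]"
    have "is_walk (centered_edges F C A sel) ?p (Inl c) (Inl f)"
      using c f False \<open>a \<in> A\<close> \<open>b \<in> A\<close>
      by (auto simp: is_walk_def centered_edges_def a_def b_def)
    moreover have "walk_length (ext_metric d) ?p \<le> 3 * d c f + 4 * d c a"
      using triangle[OF a c b] triangle[OF c f b] triangle[OF f c a]
        dist_sym[OF b f] dist_sym[OF a c] dist_sym[OF f c] b_closest nonneg[OF c a]
      by (simp add: walk_length_def ext_metric_def)
    ultimately show thesis using that[of ?p] by (simp add: a_def)
  qed
qed

lemma centered_metric_bounds:
  assumes c: "c \<in> F \<union> C" and f: "f \<in> F \<union> C"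
  shows "d c f \<le> centered_metric F C d A sel (Inl c) (Inl f)"
    and "centered_metric F C d A sel (Inl c) (Inl f) \<le> 3 * d c f + 4 * d c (sel c)"
proof -
  obtain p where p: "is_walk (centered_edges F C A sel) p (Inl c) (Inl f)"
    and p_short: "walk_length (ext_metric d) p \<le> 3 * d c f + 4 * d c (sel c)"
    using centered_path_to_closest_centers[OF c f] .
  have walks_ge: "\<And>q. is_walk (centered_edges F C A sel) q (Inl c) (Inl f) \<Longrightarrow>
      d c f \<le> walk_length (ext_metric d) q"
    by (rule centered_walk_length_ge[OF _ c])
  show "d c f \<le> centered_metric F C d A sel (Inl c) (Inl f)"
    unfolding centered_metric_def using shortest_path_dist_greatest[OF p walks_ge] .
  show "centered_metric F C d A sel (Inl c) (Inl f) \<le> 3 * d c f + 4 * d c (sel c)"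
    unfolding centered_metric_def
    using shortest_path_dist_le_walk_length[OF p walks_ge] p_short by linarith
qed

lemma Min_dist_eq_closest:
  assumes "finite A" and "v \<in> F \<union> C"
  shows "Min ((\<lambda>f. d v f) ` A) = d v (sel v)"
  using sel_closest[OF assms(2)] assms(1) by (intro Min_eqI) auto

end

theorem lemma2:
  fixes F C A :: "'a set" and u :: "'a \<Rightarrow> nat" and d :: "'a \<Rightarrow> 'a \<Rightarrow> real"
    and k l :: nat and sel :: "'a \<Rightarrow> 'a" and Op :: "'a set" and \<phi> :: "'a \<Rightarrow> 'a"
  assumes "finite F" and "finite C"
    and "is_metric_on (F \<union> C) d"
    and "A \<subseteq> F" and "A \<noteq> {}" and "card A \<le> l" and "k \<le> l"
    and "\<And>v. v \<in> F \<union> C \<Longrightarrow> sel v \<in> A \<and> (\<forall>f\<in>A. d v (sel v) \<le> d v f)"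
    and "ckm_optimal F C u d k Op \<phi>"
  shows "assign_cost d C id \<phi> \<le> assign_cost (centered_metric F C d A sel) C Inl \<phi> \<and>
         assign_cost (centered_metric F C d A sel) C Inl \<phi>
           \<le> 3 * assign_cost d C id \<phi> + 4 * cost_set d C A"
proof -
  let ?D = "centered_metric F C d A sel"
  \<comment> \<open>only feasibility of \<open>\<phi>\<close> is used, not its optimality or the bounds on \<open>k\<close> and \<open>l\<close>\<close>
  have endpoints: "c \<in> F \<union> C" "\<phi> c \<in> F \<union> C" if "c \<in> C" for c
    using assms(9) that unfolding ckm_optimal_def ckm_feasible_def by auto
  note bounds = centered_metric_bounds[OF assms(3,4,8) endpoints]
  have "assign_cost d C id \<phi> \<le> assign_cost ?D C Inl \<phi>"
    unfolding assign_cost_def using bounds(1) by (auto intro!: sum_mono)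
  moreover have "assign_cost ?D C Inl \<phi> \<le> (\<Sum>c\<in>C. 3 * d c (\<phi> c) + 4 * d c (sel c))"
    unfolding assign_cost_def using bounds(2) by (auto intro!: sum_mono)
  moreover have "(\<Sum>c\<in>C. d c (sel c)) = cost_set d C A"
    unfolding cost_set_def using Min_dist_eq_closest[OF assms(3,4,8)] assms(1,4)
    by (simp add: finite_subset)
  then have "(\<Sum>c\<in>C. 3 * d c (\<phi> c) + 4 * d c (sel c))
      = 3 * assign_cost d C id \<phi> + 4 * cost_set d C A"
    unfolding assign_cost_def by (simp add: sum.distrib flip: sum_distrib_left)
  ultimately show ?thesis by linarith
qed

end
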